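(* Let $D,D',E,E'$ be abstract storage devices. (i) If $D\le D'$ and $E\le E'$, then $D\times E\le D'\times E'$. (ii) If $D\le D'$, then $D^{(k)}\le D'^{(k)}$ for every integer $k\ge1$.
   Context: An abstract storage device (ASD) is a pair $D=(\mathcal{S}_D,\mathcal{P}_D)$, $\mathcal{S}_D$ a finite set and $\mathcal{P}_D$ a finite family of partitions of $\mathcal{S}_D$. For a partition $\pi$ of $\mathcal{S}'$ and $\phi:\mathcal{S}\to\mathcal{S}'$, $\pi\circ\phi$ is the partition of $\mathcal{S}$ with $x,y$ in the same block iff $\phi(x),\phi(y)$ are in the same block of $\pi$; $\pi\preceq\rho$ means every block of $\pi$ lies in a block of $\rho$; $\wedge$ is the meet of partitions (nonempty pairwise intersections of blocks). $D\le D'$ means there exist $\phi:\mathcal{S}_D\to\mathcal{S}_{D'}$, $\alpha:\mathcal{P}_D\to\mathcal{P}_{D'}$ with $\alpha(\pi)\circ\phi\preceq\pi$ for all $\pi\in\mathcal{P}_D$. The direct product $D\times D'$ has state space $\mathcal{S}_D\times\mathcal{S}_{D'}$ and partition set $\{\pi\times\pi':\pi\in\mathcal{P}_D,\pi'\in\mathcal{P}_{D'}\}$ with $\pi\times\pi'=\{B\times B':B\in\pi,B'\in\pi'\}$. For $k\ge1$, $D^{(k)}$ has state space $\mathcal{S}_D$ and partition set $\{\pi_1\wedge\cdots\wedge\pi_k:\pi_1,\dots,\pi_k\in\mathcal{P}_D\}$. *)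

theory Defs
  imports "HOL-Library.Disjoint_Sets"
begin

text \<open>An abstract storage device: a pair (state space, family of partitions of it).
  A partition is represented as a set of blocks (library notion partition_on).\<close>
type_synonym 'a asd = "'a set \<times> 'a set set set"

definition is_asd :: "'a asd \<Rightarrow> bool" where
  "is_asd D \<longleftrightarrow> finite (fst D) \<and> finite (snd D) \<and> (\<forall>\<pi>\<in>snd D. partition_on (fst D) \<pi>)"

definition pullback :: "'a set \<Rightarrow> ('a \<Rightarrow> 'b) \<Rightarrow> 'b set set \<Rightarrow> 'a set set" where
  "pullback S \<phi> \<pi> = S // {(x, y). x \<in> S \<and> y \<in> S \<and> (\<exists>B\<in>\<pi>. \<phi> x \<in> B \<and> \<phi> y \<in> B)}"

definition refines :: "'a set set \<Rightarrow> 'a set set \<Rightarrow> bool" where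
  "refines \<pi> \<rho> \<longleftrightarrow> (\<forall>B\<in>\<pi>. \<exists>C\<in>\<rho>. B \<subseteq> C)"

definition meet :: "'a set set \<Rightarrow> 'a set set \<Rightarrow> 'a set set" where
  "meet \<pi> \<rho> = {B \<inter> C | B C. B \<in> \<pi> \<and> C \<in> \<rho> \<and> B \<inter> C \<noteq> {}}"

definition asd_le :: "'a asd \<Rightarrow> 'b asd \<Rightarrow> bool" where
  "asd_le D D' \<longleftrightarrow> (\<exists>\<phi> \<alpha>. \<phi> ` fst D \<subseteq> fst D' \<and> \<alpha> ` snd D \<subseteq> snd D' \<and>
      (\<forall>\<pi>\<in>snd D. refines (pullback (fst D) \<phi> (\<alpha> \<pi>)) \<pi>))"

definition prod_part :: "'a set set \<Rightarrow> 'b set set \<Rightarrow> ('a \<times> 'b) set set" where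
  "prod_part \<pi> \<pi>' = {B \<times> B' | B B'. B \<in> \<pi> \<and> B' \<in> \<pi>'}"

definition asd_prod :: "'a asd \<Rightarrow> 'b asd \<Rightarrow> ('a \<times> 'b) asd" where
  "asd_prod D D' = (fst D \<times> fst D', {prod_part \<pi> \<pi>' | \<pi> \<pi>'. \<pi> \<in> snd D \<and> \<pi>' \<in> snd D'})"

fun meets :: "'a set set list \<Rightarrow> 'a set set" where
  "meets [] = {}"
| "meets (\<pi> # \<pi>s) = (if \<pi>s = [] then \<pi> else meet \<pi> (meets \<pi>s))"

definition asd_pow :: "nat \<Rightarrow> 'a asd \<Rightarrow> 'a asd" where
  "asd_pow k D = (fst D, {meets \<pi>s | \<pi>s. length \<pi>s = k \<and> set \<pi>s \<subseteq> snd D})"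

end

theory Submission
  imports Defs
begin

text \<open>The partition map \<alpha> matters only pointwise: each partition of D must be refined by the
  pullback of some partition of D'. Pullbacks of products of partitions are products of pullbacks,
  so (i) is componentwise. For (ii), the block of x in a meet of pullbacks lies in the intersection
  of the blocks of x in the refined partitions; that intersection is a block of their meet because
  it contains x, which uses that the partitions of D' cover the image of \<phi>.\<close>

definition in_same_block :: "'a set set \<Rightarrow> 'a \<Rightarrow> 'a \<Rightarrow> bool" where
  "in_same_block \<pi> x y \<longleftrightarrow> (\<exists>B\<in>\<pi>. x \<in> B \<and> y \<in> B)"

lemma in_same_block_self_iff: "in_same_block \<pi> x x \<longleftrightarrow> x \<in> \<Union>\<pi>"
  unfolding in_same_block_def by blast

lemma in_same_block_prod_part:
  "in_same_block (prod_part \<pi> \<sigma>) (a, b) (a', b') \<longleftrightarrow>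
     in_same_block \<pi> a a' \<and> in_same_block \<sigma> b b'"
  unfolding in_same_block_def prod_part_def by blast

lemma in_same_block_meet:
  "in_same_block (meet \<pi> \<sigma>) x y \<longleftrightarrow> in_same_block \<pi> x y \<and> in_same_block \<sigma> x y"
  unfolding in_same_block_def meet_def by blast

lemma in_same_block_meets:
  "ps \<noteq> [] \<Longrightarrow> in_same_block (meets ps) x y \<longleftrightarrow> (\<forall>p\<in>set ps. in_same_block p x y)"
  by (induction ps) (auto simp: in_same_block_meet)

lemma Union_meets:
  assumes "ps \<noteq> []"
  shows "\<Union>(meets ps) = (\<Inter>p\<in>set ps. \<Union>p)"
proof -
  have "x \<in> \<Union>(meets ps) \<longleftrightarrow> x \<in> (\<Inter>p\<in>set ps. \<Union>p)" for x
    using in_same_block_meets[OF assms, of x x] by (simp add: in_same_block_self_iff)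
  then show ?thesis by blast
qed

lemma refines_pullback_iff:
  "refines (pullback S \<phi> \<pi>') \<pi> \<longleftrightarrow>
     (\<forall>x\<in>S. \<exists>C\<in>\<pi>. {y\<in>S. in_same_block \<pi>' (\<phi> x) (\<phi> y)} \<subseteq> C)"
proof -
  have "{(x, y). x \<in> S \<and> y \<in> S \<and> (\<exists>B\<in>\<pi>'. \<phi> x \<in> B \<and> \<phi> y \<in> B)} `` {x}
      = {y\<in>S. in_same_block \<pi>' (\<phi> x) (\<phi> y)}" if "x \<in> S" for x
    using that unfolding in_same_block_def by auto
  then show ?thesis unfolding refines_def pullback_def quotient_def by auto
qed

lemma refines_pullback_prod_part:
  assumes "refines (pullback S \<phi> \<pi>') \<pi>" and "refines (pullback T \<psi> \<sigma>') \<sigma>"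
  shows "refines (pullback (S \<times> T) (map_prod \<phi> \<psi>) (prod_part \<pi>' \<sigma>')) (prod_part \<pi> \<sigma>)"
  unfolding refines_pullback_iff
proof
  fix z assume "z \<in> S \<times> T"
  then obtain x y where z: "z = (x, y)" "x \<in> S" "y \<in> T" by auto
  obtain C where C: "C \<in> \<pi>" "{x'\<in>S. in_same_block \<pi>' (\<phi> x) (\<phi> x')} \<subseteq> C"
    using assms(1) z(2) unfolding refines_pullback_iff by blast
  obtain C' where C': "C' \<in> \<sigma>" "{y'\<in>T. in_same_block \<sigma>' (\<psi> y) (\<psi> y')} \<subseteq> C'"
    using assms(2) z(3) unfolding refines_pullback_iff by blast
  have "C \<times> C' \<in> prod_part \<pi> \<sigma>"
    using C(1) C'(1) unfolding prod_part_def by blast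
  moreover have
    "{w\<in>S \<times> T. in_same_block (prod_part \<pi>' \<sigma>') (map_prod \<phi> \<psi> z) (map_prod \<phi> \<psi> w)} \<subseteq> C \<times> C'"
    using C(2) C'(2) by (auto simp: z(1) in_same_block_prod_part)
  ultimately show "\<exists>B\<in>prod_part \<pi> \<sigma>.
      {w\<in>S \<times> T. in_same_block (prod_part \<pi>' \<sigma>') (map_prod \<phi> \<psi> z) (map_prod \<phi> \<psi> w)} \<subseteq> B"
    by blast
qed

lemma refines_pullback_meet:
  assumes "refines (pullback S \<phi> \<pi>') \<pi>" and "refines (pullback S \<phi> \<sigma>') \<sigma>"
    and "\<phi> ` S \<subseteq> \<Union>\<pi>'" and "\<phi> ` S \<subseteq> \<Union>\<sigma>'"
  shows "refines (pullback S \<phi> (meet \<pi>' \<sigma>')) (meet \<pi> \<sigma>)"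
  unfolding refines_pullback_iff
proof
  fix x assume x: "x \<in> S"
  obtain C where C: "C \<in> \<pi>" "{y\<in>S. in_same_block \<pi>' (\<phi> x) (\<phi> y)} \<subseteq> C"
    using assms(1) x unfolding refines_pullback_iff by blast
  obtain C' where C': "C' \<in> \<sigma>" "{y\<in>S. in_same_block \<sigma>' (\<phi> x) (\<phi> y)} \<subseteq> C'"
    using assms(2) x unfolding refines_pullback_iff by blast
  have "in_same_block \<pi>' (\<phi> x) (\<phi> x)" "in_same_block \<sigma>' (\<phi> x) (\<phi> x)"
    using x assms(3,4) by (auto simp: in_same_block_self_iff)
  then have "x \<in> C \<inter> C'"
    using C(2) C'(2) x by blast
  then have "C \<inter> C' \<in> meet \<pi> \<sigma>"
    using C(1) C'(1) unfolding meet_def by blast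
  moreover have "{y\<in>S. in_same_block (meet \<pi>' \<sigma>') (\<phi> x) (\<phi> y)} \<subseteq> C \<inter> C'"
    using C(2) C'(2) by (auto simp: in_same_block_meet)
  ultimately show "\<exists>B\<in>meet \<pi> \<sigma>. {y\<in>S. in_same_block (meet \<pi>' \<sigma>') (\<phi> x) (\<phi> y)} \<subseteq> B"
    by blast
qed

lemma refines_pullback_meets:
  assumes "ps \<noteq> []"
    and "\<forall>p\<in>set ps. refines (pullback S \<phi> (\<alpha> p)) p \<and> \<phi> ` S \<subseteq> \<Union>(\<alpha> p)"
  shows "refines (pullback S \<phi> (meets (map \<alpha> ps))) (meets ps)"
  using assms
proof (induction ps)
  case Nil
  then show ?case by simp
next
  case (Cons p ps)
  show ?case
  proof (cases "ps = []")
    case True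
    with Cons.prems show ?thesis by simp
  next
    case False
    have "\<phi> ` S \<subseteq> \<Union>(meets (map \<alpha> ps))"
      using Cons.prems(2) False by (simp add: Union_meets) blast
    with Cons False show ?thesis
      by (simp add: refines_pullback_meet)
  qed
qed

lemma asd_le_iff:
  "asd_le D D' \<longleftrightarrow>
     (\<exists>\<phi>. \<phi> ` fst D \<subseteq> fst D' \<and> (\<forall>\<pi>\<in>snd D. \<exists>\<pi>'\<in>snd D'. refines (pullback (fst D) \<phi> \<pi>') \<pi>))"
proof
  assume "asd_le D D'"
  then obtain \<phi> \<alpha> where "\<phi> ` fst D \<subseteq> fst D'" "\<alpha> ` snd D \<subseteq> snd D'"
    "\<forall>\<pi>\<in>snd D. refines (pullback (fst D) \<phi> (\<alpha> \<pi>)) \<pi>"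
    unfolding asd_le_def by auto
  then show "\<exists>\<phi>. \<phi> ` fst D \<subseteq> fst D' \<and>
      (\<forall>\<pi>\<in>snd D. \<exists>\<pi>'\<in>snd D'. refines (pullback (fst D) \<phi> \<pi>') \<pi>)"
    unfolding image_subset_iff by blast
next
  assume "\<exists>\<phi>. \<phi> ` fst D \<subseteq> fst D' \<and>
      (\<forall>\<pi>\<in>snd D. \<exists>\<pi>'\<in>snd D'. refines (pullback (fst D) \<phi> \<pi>') \<pi>)"
  then obtain \<phi> where "\<phi> ` fst D \<subseteq> fst D'"
    and "\<forall>\<pi>\<in>snd D. \<exists>\<pi>'. \<pi>' \<in> snd D' \<and> refines (pullback (fst D) \<phi> \<pi>') \<pi>"
    unfolding Bex_def by auto
  moreover from this(2) obtain \<alpha>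
    where "\<forall>\<pi>\<in>snd D. \<alpha> \<pi> \<in> snd D' \<and> refines (pullback (fst D) \<phi> (\<alpha> \<pi>)) \<pi>"
    by (auto dest: bchoice)
  ultimately show "asd_le D D'" unfolding asd_le_def image_subset_iff by blast
qed

lemma asd_le_prod:
  assumes "asd_le D D'" and "asd_le E E'"
  shows "asd_le (asd_prod D E) (asd_prod D' E')"
proof -
  obtain \<phi> \<alpha> where \<phi>: "\<phi> ` fst D \<subseteq> fst D'" "\<alpha> ` snd D \<subseteq> snd D'"
    "\<forall>\<pi>\<in>snd D. refines (pullback (fst D) \<phi> (\<alpha> \<pi>)) \<pi>"
    using assms(1) unfolding asd_le_def by auto
  obtain \<psi> \<beta> where \<psi>: "\<psi> ` fst E \<subseteq> fst E'" "\<beta> ` snd E \<subseteq> snd E'"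
    "\<forall>\<sigma>\<in>snd E. refines (pullback (fst E) \<psi> (\<beta> \<sigma>)) \<sigma>"
    using assms(2) unfolding asd_le_def by auto
  show ?thesis unfolding asd_le_iff
  proof (intro exI conjI ballI)
    show "map_prod \<phi> \<psi> ` fst (asd_prod D E) \<subseteq> fst (asd_prod D' E')"
      using \<phi>(1) \<psi>(1) by (auto simp: asd_prod_def)
    fix P assume "P \<in> snd (asd_prod D E)"
    then obtain \<pi> \<sigma> where \<pi>\<sigma>: "\<pi> \<in> snd D" "\<sigma> \<in> snd E" "P = prod_part \<pi> \<sigma>"
      by (auto simp: asd_prod_def)
    have "prod_part (\<alpha> \<pi>) (\<beta> \<sigma>) \<in> snd (asd_prod D' E')"
      using \<pi>\<sigma>(1,2) \<phi>(2) \<psi>(2) unfolding asd_prod_def image_subset_iff by auto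
    moreover have "refines (pullback (fst (asd_prod D E)) (map_prod \<phi> \<psi>)
        (prod_part (\<alpha> \<pi>) (\<beta> \<sigma>))) P"
      using \<pi>\<sigma> \<phi>(3) \<psi>(3) by (simp add: asd_prod_def refines_pullback_prod_part)
    ultimately show "\<exists>P'\<in>snd (asd_prod D' E').
        refines (pullback (fst (asd_prod D E)) (map_prod \<phi> \<psi>) P') P"
      by blast
  qed
qed

lemma asd_le_pow:
  assumes "is_asd D'" and "asd_le D D'" and "k \<ge> 1"
  shows "asd_le (asd_pow k D) (asd_pow k D')"
proof -
  obtain \<phi> \<alpha> where \<phi>: "\<phi> ` fst D \<subseteq> fst D'" "\<alpha> ` snd D \<subseteq> snd D'"
    "\<forall>\<pi>\<in>snd D. refines (pullback (fst D) \<phi> (\<alpha> \<pi>)) \<pi>"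
    using assms(2) unfolding asd_le_def by auto
  have cover: "\<phi> ` fst D \<subseteq> \<Union>(\<alpha> \<pi>)" if "\<pi> \<in> snd D" for \<pi>
    using assms(1) that \<phi>(1,2) unfolding is_asd_def partition_on_def by blast
  show ?thesis unfolding asd_le_iff
  proof (intro exI conjI ballI)
    show "\<phi> ` fst (asd_pow k D) \<subseteq> fst (asd_pow k D')"
      using \<phi>(1) by (simp add: asd_pow_def)
    fix P assume "P \<in> snd (asd_pow k D)"
    then obtain ps where ps: "length ps = k" "set ps \<subseteq> snd D" "P = meets ps"
      by (auto simp: asd_pow_def)
    have "set (map \<alpha> ps) \<subseteq> snd D'"
      using ps(2) \<phi>(2) by (metis image_mono order_trans set_map)
    then have meets_in: "meets (map \<alpha> ps) \<in> snd (asd_pow k D')"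
      using ps(1) unfolding asd_pow_def by (auto intro!: exI[of _ "map \<alpha> ps"])
    have "ps \<noteq> []" using ps(1) assms(3) by auto
    moreover have
      "\<forall>p\<in>set ps. refines (pullback (fst D) \<phi> (\<alpha> p)) p \<and> \<phi> ` fst D \<subseteq> \<Union>(\<alpha> p)"
      using ps(2) \<phi>(3) cover by blast
    ultimately have "refines (pullback (fst (asd_pow k D)) \<phi> (meets (map \<alpha> ps))) P"
      unfolding ps(3) by (simp add: asd_pow_def refines_pullback_meets)
    with meets_in show "\<exists>P'\<in>snd (asd_pow k D'). refines (pullback (fst (asd_pow k D)) \<phi> P') P"
      by blast
  qed
qed

theorem proposition1:
  fixes D :: "'a asd" and D' :: "'b asd" and E :: "'c asd" and E' :: "'d asd"
  assumes "is_asd D" "is_asd D'" "is_asd E" "is_asd E'"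
  shows "(asd_le D D' \<and> asd_le E E' \<longrightarrow> asd_le (asd_prod D E) (asd_prod D' E'))
       \<and> (\<forall>k::nat. k \<ge> 1 \<longrightarrow> asd_le D D' \<longrightarrow> asd_le (asd_pow k D) (asd_pow k D'))"
  using asd_le_prod asd_le_pow[OF assms(2)] by blast

end
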